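(* Let $K\ge 1$ be an integer, $\alpha\in(0,1)$, $\epsilon>0$, $\delta>0$, and let $n_\mathrm{cal}$ be a positive integer. Set $C(K)=(1+\epsilon)\sum_{j=1}^K \frac{1}{j}$ and, for $j=1,\dots,K$, $a_j=\left\lfloor (n_\mathrm{cal}+1)\frac{\alpha j}{C(K)K}\right\rfloor$, $b_j=(n_\mathrm{cal}+1)-a_j$, $\mu_j=\frac{a_j}{a_j+b_j}$. Suppose $n_\mathrm{cal}$ is such that $$\min_{j=1,\dots,K} I_{(1+\epsilon)\mu_j}(a_j,b_j)\ \ge\ 1-\frac{\delta}{K^2},$$ where $I_x(a,b)$ denotes the regularized incomplete beta function (the CDF at $x$ of a $\mathrm{Beta}(a,b)$ distribution). Let $\{r^i_j : i,j=1,\dots,K\}$ be random variables (with arbitrary joint distribution) such that $r^i_j\sim\mathrm{Beta}(a_j,b_j)$ for each $i,j$. Then $$P\left\{\bigcap_{i=1}^K\bigcap_{j=1}^K\left\{ r^i_j\le (1+\epsilon)\frac{\alpha j}{C(K)K}\right\}\right\}\ \ge\ 1-\delta.$$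
   Context: The quantities $a_j,b_j$ are assumed to be such that the Beta distributions $\mathrm{Beta}(a_j,b_j)$ are well defined (i.e. $a_j\ge 1$, $b_j\ge 1$), as implicit in the hypothesis. *)

theory Defs
  imports "HOL-Probability.Probability"
begin

definition beta_density :: "real \<Rightarrow> real \<Rightarrow> real \<Rightarrow> real" where
  "beta_density a b x =
     (if 0 < x \<and> x < 1 then x powr (a - 1) * (1 - x) powr (b - 1) / Beta a b else 0)"

definition reg_inc_beta :: "real \<Rightarrow> real \<Rightarrow> real \<Rightarrow> real" where
  "reg_inc_beta x a b = (LINT t:{..x}|lborel. beta_density a b t)"

definition CK :: "real \<Rightarrow> nat \<Rightarrow> real" where
  "CK eps K = (1 + eps) * (\<Sum>j=1..K. 1 / real j)"

definition a_par :: "nat \<Rightarrow> real \<Rightarrow> real \<Rightarrow> nat \<Rightarrow> nat \<Rightarrow> real" where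
  "a_par ncal alpha eps K j =
     of_int \<lfloor>(real ncal + 1) * (alpha * real j / (CK eps K * real K))\<rfloor>"

definition b_par :: "nat \<Rightarrow> real \<Rightarrow> real \<Rightarrow> nat \<Rightarrow> nat \<Rightarrow> real" where
  "b_par ncal alpha eps K j = (real ncal + 1) - a_par ncal alpha eps K j"

definition mu_par :: "nat \<Rightarrow> real \<Rightarrow> real \<Rightarrow> nat \<Rightarrow> nat \<Rightarrow> real" where
  "mu_par ncal alpha eps K j =
     a_par ncal alpha eps K j / (a_par ncal alpha eps K j + b_par ncal alpha eps K j)"

end

theory Submission
  imports Defs
begin

text \<open>Since \<open>a\<^sub>j \<le> (n\<^sub>c\<^sub>a\<^sub>l + 1) \<alpha> j / (C(K) K)\<close> and \<open>a\<^sub>j + b\<^sub>j = n\<^sub>c\<^sub>a\<^sub>l + 1\<close>, the mean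
  \<open>\<mu>\<^sub>j\<close> is at most \<open>\<alpha> j / (C(K) K)\<close>. Hence each threshold \<open>(1 + \<epsilon>) \<alpha> j / (C(K) K)\<close>
  lies above \<open>(1 + \<epsilon>) \<mu>\<^sub>j\<close>, and the event that \<open>r\<^sup>i\<^sub>j\<close> stays below it has probability at
  least \<open>I\<^bsub>(1+\<epsilon>)\<mu>\<^sub>j\<^esub>(a\<^sub>j, b\<^sub>j) \<ge> 1 - \<delta>/K\<^sup>2\<close>. A union bound over the \<open>K\<^sup>2\<close> pairs, which
  needs no independence, gives the claim.\<close>

lemma beta_density_nonneg: "0 < a \<Longrightarrow> 0 < b \<Longrightarrow> 0 \<le> beta_density a b x"
  unfolding beta_density_def by (auto intro!: divide_nonneg_pos simp: Beta_def Gamma_real_pos)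

lemma borel_measurable_beta_density [measurable]: "beta_density a b \<in> borel_measurable borel"
  unfolding beta_density_def by measurable

lemma measure_le_eq_set_integral_density:
  fixes X :: "'a \<Rightarrow> real"
  assumes X: "distributed M lborel X (\<lambda>x. ennreal (f x))"
    and f_nonneg: "\<And>x. 0 \<le> f x" and f_meas: "f \<in> borel_measurable borel"
  shows "measure M {\<omega> \<in> space M. X \<omega> \<le> t} = (LINT x:{..t}|lborel. f x)"
proof -
  have X_meas: "X \<in> measurable M lborel"
    using X by (rule distributed_measurable)
  have "measure M {\<omega> \<in> space M. X \<omega> \<le> t} = measure M (X -` {..t} \<inter> space M)"
    by (auto intro: arg_cong[where f = "measure M"])
  also have "\<dots> = measure (distr M lborel X) {..t}"
    using X_meas by (simp add: measure_distr)
  also have "\<dots> = measure (density lborel (\<lambda>x. ennreal (f x))) {..t}"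
    using distributed_distr_eq_density[OF X] by simp
  also have "\<dots> = enn2real (\<integral>\<^sup>+ x. ennreal (indicator {..t} x *\<^sub>R f x) \<partial>lborel)"
    unfolding measure_def using f_meas
    by (auto simp: emeasure_density indicator_def intro!: arg_cong[where f = enn2real] nn_integral_cong)
  also have "\<dots> = (LINT x:{..t}|lborel. f x)"
    unfolding set_lebesgue_integral_def
    by (rule integral_eq_nn_integral[symmetric]) (use f_meas in \<open>auto simp: f_nonneg\<close>)
  finally show ?thesis .
qed

lemma measure_le_eq_reg_inc_beta:
  assumes "distributed M lborel X (\<lambda>x. ennreal (beta_density a b x))" and "0 < a" "0 < b"
  shows "measure M {\<omega> \<in> space M. X \<omega> \<le> t} = reg_inc_beta t a b"
  unfolding reg_inc_beta_def
  using assms by (intro measure_le_eq_set_integral_density) (auto simp: beta_density_nonneg)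

lemma (in prob_space) reg_inc_beta_le_prob_le:
  assumes "distributed M lborel X (\<lambda>x. ennreal (beta_density a b x))" and "0 < a" "0 < b"
    and "s \<le> t"
  shows "reg_inc_beta s a b \<le> prob {\<omega> \<in> space M. X \<omega> \<le> t}"
proof -
  have "X \<in> borel_measurable M"
    using distributed_measurable[OF assms(1)] by simp
  then have "prob {\<omega> \<in> space M. X \<omega> \<le> s} \<le> prob {\<omega> \<in> space M. X \<omega> \<le> t}"
    using \<open>s \<le> t\<close> by (intro finite_measure_mono) auto
  then show ?thesis
    using measure_le_eq_reg_inc_beta[OF assms(1-3)] by simp
qed

lemma mu_par_le: "mu_par ncal alpha eps K j \<le> alpha * real j / (CK eps K * real K)"
proof -
  have "a_par ncal alpha eps K j \<le> (real ncal + 1) * (alpha * real j / (CK eps K * real K))"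
    unfolding a_par_def by linarith
  then show ?thesis
    unfolding mu_par_def b_par_def by (simp add: divide_simps mult.commute)
qed

lemma (in prob_space) prob_Ball_ge_one_minus_sum:
  assumes "finite I" and events: "\<And>x. x \<in> I \<Longrightarrow> {\<omega> \<in> space M. P x \<omega>} \<in> events"
  shows "1 - (\<Sum>x\<in>I. 1 - prob {\<omega> \<in> space M. P x \<omega>}) \<le> prob {\<omega> \<in> space M. \<forall>x\<in>I. P x \<omega>}"
proof -
  let ?A = "\<lambda>x. space M - {\<omega> \<in> space M. P x \<omega>}"
  have compl_events: "?A ` I \<subseteq> events"
    using events by auto
  have "{\<omega> \<in> space M. \<forall>x\<in>I. P x \<omega>} = space M - (\<Union>x\<in>I. ?A x)"
    by auto
  moreover have "prob (space M - (\<Union>x\<in>I. ?A x)) = 1 - prob (\<Union>x\<in>I. ?A x)"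
  proof (rule prob_compl)
    show "(\<Union>x\<in>I. ?A x) \<in> events"
      using compl_events \<open>finite I\<close> by (intro sets.finite_UN) auto
  qed
  ultimately have "prob {\<omega> \<in> space M. \<forall>x\<in>I. P x \<omega>} = 1 - prob (\<Union>x\<in>I. ?A x)"
    by simp
  moreover have "prob (\<Union>x\<in>I. ?A x) \<le> (\<Sum>x\<in>I. prob (?A x))"
    using compl_events \<open>finite I\<close> by (intro finite_measure_subadditive_finite) auto
  moreover have "prob (?A x) = 1 - prob {\<omega> \<in> space M. P x \<omega>}" if "x \<in> I" for x
    using events[OF that] by (rule prob_compl)
  ultimately show ?thesis
    by simp
qed

theorem lemma1:
  fixes M :: "'s measure" and r :: "nat \<Rightarrow> nat \<Rightarrow> 's \<Rightarrow> real"
    and K ncal :: nat and alpha eps delta :: real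
  assumes "prob_space M"
    and "K \<ge> 1" and "0 < alpha" and "alpha < 1" and "eps > 0" and "delta > 0"
    and "ncal > 0"
    and ab_ge1: "\<And>j. j \<in> {1..K} \<Longrightarrow>
                   a_par ncal alpha eps K j \<ge> 1 \<and> b_par ncal alpha eps K j \<ge> 1"
    and hyp: "(MIN j\<in>{1..K}. reg_inc_beta ((1 + eps) * mu_par ncal alpha eps K j)
                  (a_par ncal alpha eps K j) (b_par ncal alpha eps K j))
              \<ge> 1 - delta / (real K)^2"
    and distr: "\<And>i j. i \<in> {1..K} \<Longrightarrow> j \<in> {1..K} \<Longrightarrow>
        distributed M lborel (r i j)
          (\<lambda>x. ennreal (beta_density (a_par ncal alpha eps K j) (b_par ncal alpha eps K j) x))"
  shows "measure M {\<omega> \<in> space M. \<forall>i\<in>{1..K}. \<forall>j\<in>{1..K}.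
            r i j \<omega> \<le> (1 + eps) * (alpha * real j / (CK eps K * real K))} \<ge> 1 - delta"
proof -
  interpret prob_space M by fact
  define t where "t j = (1 + eps) * (alpha * real j / (CK eps K * real K))" for j
  define E where "E ij = {\<omega> \<in> space M. r (fst ij) (snd ij) \<omega> \<le> t (snd ij)}" for ij
  let ?I = "{1..K} \<times> {1..K}"
  have E_events: "E ij \<in> events" if "ij \<in> ?I" for ij
    using distributed_measurable[OF distr] that unfolding E_def by auto
  have E_prob: "1 - prob (E ij) \<le> delta / (real K)^2" if "ij \<in> ?I" for ij
  proof -
    obtain i j where ij: "ij = (i, j)" "i \<in> {1..K}" "j \<in> {1..K}"
      using \<open>ij \<in> ?I\<close> by auto
    let ?s = "(1 + eps) * mu_par ncal alpha eps K j"
    have "1 - delta / (real K)^2 \<le> reg_inc_beta ?s (a_par ncal alpha eps K j) (b_par ncal alpha eps K j)"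
      using hyp Min_le[of "(\<lambda>j. reg_inc_beta ((1 + eps) * mu_par ncal alpha eps K j)
                  (a_par ncal alpha eps K j) (b_par ncal alpha eps K j)) ` {1..K}"] ij by force
    also have "\<dots> \<le> prob (E ij)"
    proof -
      have "?s \<le> t j"
        unfolding t_def using mu_par_le \<open>eps > 0\<close> by (intro mult_left_mono) auto
      then show ?thesis
        using distr[OF ij(2,3)] ab_ge1[OF ij(3)] unfolding E_def ij(1)
        by (intro reg_inc_beta_le_prob_le) auto
    qed
    finally show ?thesis by simp
  qed
  have "1 - delta = 1 - (\<Sum>ij\<in>?I. delta / (real K)^2)"
    using \<open>K \<ge> 1\<close> by (simp add: power2_eq_square)
  also have "\<dots> \<le> 1 - (\<Sum>ij\<in>?I. 1 - prob (E ij))"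
    by (intro diff_left_mono sum_mono E_prob)
  also have "\<dots> \<le> prob {\<omega> \<in> space M. \<forall>ij\<in>?I. r (fst ij) (snd ij) \<omega> \<le> t (snd ij)}"
    using E_events unfolding E_def by (intro prob_Ball_ge_one_minus_sum) auto
  also have "{\<omega> \<in> space M. \<forall>ij\<in>?I. r (fst ij) (snd ij) \<omega> \<le> t (snd ij)}
      = {\<omega> \<in> space M. \<forall>i\<in>{1..K}. \<forall>j\<in>{1..K}. r i j \<omega> \<le> t j}"
    by auto
  finally show ?thesis
    unfolding t_def .
qed

end
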